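(* Under the standing setup and assumptions, for every $k\ge 0$, $$\mathbb{E}\big[\|\boldsymbol{x}^{k+1}-\boldsymbol{x}^*\|^2\big]\le \mathbb{E}\big[\|\boldsymbol{x}^{k}-\boldsymbol{x}^*\|^2\big]-2a_k\,\mathbb{E}\big[\mathcal{L}(\boldsymbol{x}^k,\boldsymbol{\lambda}^k)-\mathcal{L}(\boldsymbol{x}^*,\boldsymbol{\lambda}^k)\big]+a_k^2\big(2LG(N-\bar A_k(\beta))+\beta\sigma^2+L^2\big)+2a_k(N-\bar A_k(\beta))RG+a_k^2L^2(N-\bar A_k(\beta))^2 .$$
   Context: Standing setup (DPD-AirComp). Let $N\ge1$, $D\ge1$, $\mathcal{N}=\{1,\dots,N\}$. Let $f_0,f_1,\dots,f_N:\mathbb{R}^D\to\mathbb{R}$ be convex (not necessarily differentiable) and $\mathcal{X}\subset\mathbb{R}^D$ nonempty, compact and convex. Consider $\min_{\boldsymbol{x}\in\mathcal{X}} f_0(\boldsymbol{x})$ s.t. $f_i(\boldsymbol{x})\le 0$, $i\in\mathcal{N}$, with optimal value $f_0^*$. Write $\boldsymbol{F}(\boldsymbol{x})=[f_1(\boldsymbol{x}),\dots,f_N(\boldsymbol{x})]^T$, the Lagrangian $\mathcal{L}(\boldsymbol{x},\boldsymbol{\lambda})=f_0(\boldsymbol{x})+\sum_{i=1}^N\lambda_if_i(\boldsymbol{x})$ on $\mathcal{X}\times\mathbb{R}^N_+$, and the dual function $q(\boldsymbol{\lambda})=\inf_{\boldsymbol{x}\in\mathcal{X}}\mathcal{L}(\boldsymbol{x},\boldsymbol{\lambda})$.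 Let $\boldsymbol{g}_i(\boldsymbol{x})$ denote a (fixed choice of) subgradient of $f_i$ at $\boldsymbol{x}$, $i=0,\dots,N$, and $\boldsymbol{\mathcal{L}}_x(\boldsymbol{x},\boldsymbol{\lambda})=\boldsymbol{g}_0(\boldsymbol{x})+\sum_i\lambda_i\boldsymbol{g}_i(\boldsymbol{x})$, $\boldsymbol{\mathcal{L}}_\lambda(\boldsymbol{x},\boldsymbol{\lambda})=\boldsymbol{F}(\boldsymbol{x})$. Let $\bar{\boldsymbol{x}}\in\mathcal{X}$ be a Slater point ($f_i(\bar{\boldsymbol{x}})<0$ for all $i$), $\gamma=\min_{1\le i\le N}\{-f_i(\bar{\boldsymbol{x}})\}$, $\tilde q=q(\tilde{\boldsymbol{\lambda}})$ for some fixed $\tilde{\boldsymbol{\lambda}}\succeq 0$, and for a parameter $r>0$ let $\mathcal{D}=\{\boldsymbol{\lambda}\succeq 0:\|\boldsymbol{\lambda}\|_\infty\le \frac{f_0(\bar{\boldsymbol{x}})-\tilde q}{\gamma}+r\}$. $\mathcal{P}_{\mathcal{S}}[z]=\arg\min_{s\in\mathcal{S}}\|s-z\|^2$ is Euclidean projection. Let $(\boldsymbol{x}^*,\boldsymbol{\lambda}^* )\in\mathcal{X}\times\mathcal{D}$ be a saddle point of $\mathcal{L}$, i.e. $\mathcal{L}(\boldsymbol{x}^*,\boldsymbol{\lambda})\le\mathcal{L}(\boldsymbol{x}^*,\boldsymbol{\lambda}^* )\le\mathcal{L}(\boldsymbol{x},\boldsymbol{\lambda}^* )$ for all $\boldsymbol{x}\in\mathcal{X},\boldsymbol{\lambda}\in\mathcal{D}$,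 with $\mathcal{L}(\boldsymbol{x}^*,\boldsymbol{\lambda}^* )=f_0^*$. Iteration: given initial $\boldsymbol{x}^0\in\mathcal{X}$, $\boldsymbol{\lambda}^0\in\mathcal{D}$, step sizes $a_k\in(0,1)$, a preprocessing scalar $\beta>0$ and a power budget $P_{\max}>0$, at round $k$ set $\boldsymbol{s}_i^k=\lambda_i^k\boldsymbol{g}_i(\boldsymbol{x}^k)$; with random channel coefficients $h_i^k$, the participating set is $\mathcal{A}^k=\{i\in\mathcal{N}: |h_i^k|^2\ge \|\boldsymbol{s}_i^k\|^2/(\beta P_{\max})\}$; the server obtains $\tilde{\boldsymbol{y}}^k=\sum_{i\in\mathcal{A}^k}\boldsymbol{s}_i^k+\sqrt{\beta}\,\boldsymbol{n}^k$, where $\boldsymbol{n}^k\in\mathbb{R}^D$ is zero-mean noise with $\mathbb{E}\|\boldsymbol{n}^k\|^2=\sigma^2$, independent of all other randomness; updates are $\boldsymbol{x}^{k+1}=\mathcal{P}_{\mathcal{X}}[\boldsymbol{x}^k-a_k(\boldsymbol{g}_0(\boldsymbol{x}^k)+\tilde{\boldsymbol{y}}^k)]$ and $\lambda_i^{k+1}=\mathcal{P}_{\mathcal{D}}[\lambda_i^k+a_kf_i(\boldsymbol{x}^k)]$ (componentwise projection onto $[0,\frac{f_0(\bar{\boldsymbol{x}})-\tilde q}{\gamma}+r]$). $\bar A_k(\beta)=\mathbb{E}[|\mathcal{A}^k|]$ is the average number of participating users in round $k$. Expectations are over channels and noise. Assumptions: there are constants $G,L,R>0$ with $L>G$ such that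 for all $i,k$: $\|\lambda_i^k\boldsymbol{g}_i(\boldsymbol{x}^k)\|\le G$, $\|\boldsymbol{\mathcal{L}}_x(\boldsymbol{x}^k,\boldsymbol{\lambda}^k)\|\le L$, $\|\boldsymbol{F}(\boldsymbol{x}^k)\|\le L$, and $\|\boldsymbol{x}^k-\boldsymbol{x}^*\|\le R$. *)

theory Defs
  imports "HOL-Probability.Probability"
begin

text \<open>Lagrangian L(x,lambda) = f_0(x) + sum_{i=1..N} lambda_i f_i(x); multipliers are
  functions nat => real of which only the components 1..N are used.\<close>
definition Lag :: "nat \<Rightarrow> (nat \<Rightarrow> 'v \<Rightarrow> real) \<Rightarrow> 'v \<Rightarrow> (nat \<Rightarrow> real) \<Rightarrow> real" where
  "Lag N f x lam = f 0 x + (\<Sum>i\<in>{1..N}. lam i * f i x)"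

definition dualfun :: "nat \<Rightarrow> (nat \<Rightarrow> 'v \<Rightarrow> real) \<Rightarrow> 'v set \<Rightarrow> (nat \<Rightarrow> real) \<Rightarrow> real" where
  "dualfun N f X lam = (INF x\<in>X. Lag N f x lam)"

definition optval :: "nat \<Rightarrow> (nat \<Rightarrow> 'v \<Rightarrow> real) \<Rightarrow> 'v set \<Rightarrow> real" where
  "optval N f X = (INF x\<in>{x\<in>X. \<forall>i\<in>{1..N}. f i x \<le> 0}. f 0 x)"

definition is_subgrad :: "('v::real_inner \<Rightarrow> real) \<Rightarrow> 'v \<Rightarrow> 'v \<Rightarrow> bool" where
  "is_subgrad h x g \<longleftrightarrow> (\<forall>y. h y \<ge> h x + inner g (y - x))"

definition Dset :: "nat \<Rightarrow> real \<Rightarrow> (nat \<Rightarrow> real) set" where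
  "Dset N B = {lam. (\<forall>i\<in>{1..N}. 0 \<le> lam i) \<and> (MAX i\<in>{1..N}. \<bar>lam i\<bar>) \<le> B}"

text \<open>Independence of two random variables with possibly different value spaces
  (same as prob_space.indep_var, which requires a common value type).\<close>
definition indep_rv :: "'w measure \<Rightarrow> 'a measure \<Rightarrow> ('w \<Rightarrow> 'a) \<Rightarrow> 'b measure \<Rightarrow> ('w \<Rightarrow> 'b) \<Rightarrow> bool" where
  "indep_rv M Ma X Mb Y \<longleftrightarrow> X \<in> measurable M Ma \<and> Y \<in> measurable M Mb \<and>
     prob_space.indep_set M {X -` A \<inter> space M | A. A \<in> sets Ma} {Y -` B \<inter> space M | B. B \<in> sets Mb}"

end

theory Submission
  imports Defs
begin

text \<open>Fix an outcome of the channels and of the noise. The server's direction differs from the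
  Lagrangian subgradient \<open>g\<^sub>0(x\<^sup>k) + \<Sum>\<^sub>i s\<^sub>i\<^sup>k\<close> by the noise \<open>sqrt \<beta> n\<^sup>k\<close> and by the signals of the
  \<open>N - |A\<^sup>k|\<close> silent users, each of norm at most \<open>G\<close>. Non-expansiveness of the projection and the
  subgradient inequality give the usual descent estimate, in which the silent users are charged
  only linearly, \<open>2 a\<^sub>k R G (N - |A\<^sup>k|)\<close>, thanks to the a priori bound \<open>R\<close> on the distance of the
  new iterate. Taking expectations, the cross term between the noise and a function of \<open>x\<^sup>k\<close> and
  \<open>\<lambda>\<^sup>k\<close> vanishes: \<open>n\<^sup>k\<close> has mean zero and is independent of the channels and of the earlier
  noise, which determine \<open>x\<^sup>k\<close> and \<open>\<lambda>\<^sup>k\<close>.\<close>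

lemma le_norm_sq_add_perturbation:
  fixes u e :: "'a::real_normed_vector"
  assumes "q \<le> R\<^sup>2" "q \<le> (norm (u + e))\<^sup>2" "0 \<le> R"
  shows "q \<le> (norm u)\<^sup>2 + 2 * R * norm e"
proof -
  define t s where "t = norm u" and "s = norm e"
  have "0 \<le> t" "0 \<le> s" by (auto simp: t_def s_def)
  have "norm (u + e) \<le> t + s" unfolding t_def s_def by (rule norm_triangle_ineq)
  then have q_le: "q \<le> (t + s)\<^sup>2" using assms(2) by (smt (verit) norm_ge_zero power_mono)
  consider "t + s \<le> R" | "R \<le> t" | "t < R" "R < t + s" by linarith
  then show ?thesis
  proof cases
    case 1
    then have "s * (s + 2 * t) \<le> s * (2 * R)" using \<open>0 \<le> t\<close> \<open>0 \<le> s\<close> by (intro mult_left_mono) auto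
    then show ?thesis using q_le unfolding t_def s_def by (simp add: power2_eq_square algebra_simps)
  next
    case 2
    then have "R\<^sup>2 \<le> t\<^sup>2" using assms(3) by (simp add: power_mono)
    then show ?thesis using assms(1,3) \<open>0 \<le> s\<close> unfolding t_def s_def by (smt (verit) mult_nonneg_nonneg)
  next
    case 3
    have "R\<^sup>2 - t\<^sup>2 = (R - t) * (R + t)" by (simp add: power2_eq_square algebra_simps)
    also have "\<dots> \<le> 2 * R * s" using 3 \<open>0 \<le> t\<close> by (subst mult.commute, intro mult_mono) auto
    finally show ?thesis using assms(1) unfolding t_def s_def by linarith
  qed
qed

lemma norm_sum_diff_le_card:
  fixes u :: "'i \<Rightarrow> 'a::real_normed_vector"
  assumes "finite I" "A \<subseteq> I" "\<And>i. i \<in> I \<Longrightarrow> norm (u i) \<le> G"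
  shows "norm (\<Sum>i\<in>I - A. u i) \<le> G * (real (card I) - real (card A))"
proof -
  have "norm (\<Sum>i\<in>I - A. u i) \<le> (\<Sum>i\<in>I - A. G)" by (rule sum_norm_le) (use assms(3) in auto)
  also have "\<dots> = G * (real (card I) - real (card A))"
    using assms(1,2) by (simp add: card_Diff_subset finite_subset card_mono of_nat_diff)
  finally show ?thesis .
qed

lemma Lag_diff_le_inner_subgrad:
  assumes "\<And>i. i \<in> {0..N} \<Longrightarrow> is_subgrad (f i) y (gy i)"
    and "\<And>i. i \<in> {1..N} \<Longrightarrow> 0 \<le> l i"
  shows "Lag N f y l - Lag N f z l \<le> inner (gy 0 + (\<Sum>i\<in>{1..N}. l i *\<^sub>R gy i)) (y - z)"
proof -
  have sg: "f i y - f i z \<le> inner (gy i) (y - z)" if "i \<in> {0..N}" for i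
    using assms(1)[OF that] unfolding is_subgrad_def by (smt (verit) inner_minus_right minus_diff_eq)
  have "(\<Sum>i\<in>{1..N}. l i * (f i y - f i z)) \<le> (\<Sum>i\<in>{1..N}. l i * inner (gy i) (y - z))"
    using sg assms(2) by (intro sum_mono mult_left_mono) auto
  moreover have "f 0 y - f 0 z \<le> inner (gy 0) (y - z)" using sg by simp
  ultimately show ?thesis
    by (simp add: Lag_def inner_add_left inner_sum_left sum_subtractf right_diff_distrib)
qed

lemma norm_diff_sq:
  fixes u v :: "'a::real_inner"
  shows "(norm (u - v))\<^sup>2 = (norm u)\<^sup>2 - 2 * inner u v + (norm v)\<^sup>2"
  by (simp add: power2_norm_eq_inner inner_diff_left inner_diff_right inner_commute)

text \<open>\<open>Lx = g0 + S + E\<close> is the exact direction, of which the step only uses \<open>g0 + S\<close>.\<close>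
lemma projected_step_norm_sq_le:
  fixes xk z g0 S \<nu> E Lx :: "'v::euclidean_space"
  assumes "convex X" "closed X" "z \<in> X"
    and dist_R: "norm (closest_point X (xk - a *\<^sub>R (g0 + (S + sqrt \<beta> *\<^sub>R \<nu>))) - z) \<le> R"
    and "0 < a" "0 < \<beta>"
    and Lx: "Lx = g0 + S + E" "norm E \<le> e" "norm Lx \<le> L"
    and gap: "gap \<le> inner Lx (xk - z)"
  shows "(norm (closest_point X (xk - a *\<^sub>R (g0 + (S + sqrt \<beta> *\<^sub>R \<nu>))) - z))\<^sup>2
    \<le> (norm (xk - z))\<^sup>2 - 2 * a * gap + a\<^sup>2 * L\<^sup>2
      - 2 * a * sqrt \<beta> * inner (xk - z - a *\<^sub>R Lx) \<nu> + a\<^sup>2 * \<beta> * (norm \<nu>)\<^sup>2 + 2 * a * R * e"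
proof -
  define v where "v = xk - a *\<^sub>R (g0 + (S + sqrt \<beta> *\<^sub>R \<nu>))"
  define w where "w = xk - z - a *\<^sub>R Lx"
  define q where "q = (norm (closest_point X v - z))\<^sup>2"
  have "0 \<le> R" using dist_R norm_ge_zero order_trans by blast
  have "norm (closest_point X v - z) \<le> norm (v - z)"
    using closest_point_lipschitz[OF assms(1,2), of v z] closest_point_self[OF assms(3)] assms(3)
    by (auto simp: dist_norm)
  moreover have "v - z = (w - (a * sqrt \<beta>) *\<^sub>R \<nu>) + a *\<^sub>R E"
    unfolding v_def w_def Lx by (simp add: algebra_simps)
  ultimately have "q \<le> (norm ((w - (a * sqrt \<beta>) *\<^sub>R \<nu>) + a *\<^sub>R E))\<^sup>2"
    unfolding q_def by (metis norm_ge_zero power_mono)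
  moreover have "q \<le> R\<^sup>2" using dist_R unfolding q_def v_def by (simp add: power_mono)
  ultimately have "q \<le> (norm (w - (a * sqrt \<beta>) *\<^sub>R \<nu>))\<^sup>2 + 2 * R * norm (a *\<^sub>R E)"
    using le_norm_sq_add_perturbation \<open>0 \<le> R\<close> by blast
  moreover have "2 * R * norm (a *\<^sub>R E) \<le> 2 * a * R * e"
    using \<open>0 < a\<close> \<open>0 \<le> R\<close> Lx(2) by (simp add: mult_left_mono mult.left_commute)
  moreover have "(norm (w - (a * sqrt \<beta>) *\<^sub>R \<nu>))\<^sup>2
      = (norm w)\<^sup>2 - 2 * a * sqrt \<beta> * inner w \<nu> + a\<^sup>2 * \<beta> * (norm \<nu>)\<^sup>2"
    using assms(5,6) by (simp add: norm_diff_sq power_mult_distrib)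
  moreover have "(norm w)\<^sup>2 = (norm (xk - z))\<^sup>2 - 2 * a * inner (xk - z) Lx + a\<^sup>2 * (norm Lx)\<^sup>2"
    unfolding w_def using \<open>0 < a\<close> by (simp add: norm_diff_sq power_mult_distrib)
  moreover have "a\<^sup>2 * (norm Lx)\<^sup>2 \<le> a\<^sup>2 * L\<^sup>2" using Lx(3) by (simp add: power_mono mult_left_mono)
  moreover have "2 * a * gap \<le> 2 * a * inner (xk - z) Lx" using gap \<open>0 < a\<close> by (simp add: inner_commute)
  ultimately show ?thesis unfolding q_def v_def w_def by linarith
qed

lemma indep_rv_imp_indep_var:
  fixes u v :: "'w \<Rightarrow> real"
  assumes "prob_space M" and ind: "indep_rv M Ma U Mb V"
    and u: "u \<in> borel_measurable (vimage_algebra (space M) U Ma)"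
    and v: "v \<in> borel_measurable (vimage_algebra (space M) V Mb)"
  shows "prob_space.indep_var M borel u borel v"
proof -
  interpret prob_space M by fact
  have U: "U \<in> space M \<rightarrow> space Ma" and V: "V \<in> space M \<rightarrow> space Mb"
    using ind by (auto simp: indep_rv_def measurable_def)
  have sub: "subalgebra M (vimage_algebra (space M) W Mw)" if "W \<in> measurable M Mw" for W Mw
    using that by (auto simp: subalgebra_def sets_vimage_algebra2 measurable_def)
  have gen: "sigma_sets (space M) {F -` A \<inter> space M | A. A \<in> sets (borel :: real measure)} \<subseteq> sets Sg"
    if "F \<in> borel_measurable Sg" "space Sg = space M" for F and Sg :: "'w measure"
    using that sets.sigma_algebra_axioms[of Sg] measurable_sets[OF that(1)]
    by (intro sigma_algebra.sigma_sets_subset) auto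
  have "indep_set (sets (vimage_algebra (space M) U Ma)) (sets (vimage_algebra (space M) V Mb))"
    using ind by (simp add: indep_rv_def sets_vimage_algebra2[OF U] sets_vimage_algebra2[OF V])
  moreover have "sigma_sets (space M) {u -` A \<inter> space M | A. A \<in> sets borel}
      \<subseteq> sets (vimage_algebra (space M) U Ma)"
    "sigma_sets (space M) {v -` A \<inter> space M | A. A \<in> sets borel}
      \<subseteq> sets (vimage_algebra (space M) V Mb)"
    using gen[OF u] gen[OF v] by simp_all
  ultimately have "indep_set (sigma_sets (space M) {u -` A \<inter> space M | A. A \<in> sets borel})
      (sigma_sets (space M) {v -` A \<inter> space M | A. A \<in> sets borel})"
    unfolding indep_set_def by (elim indep_sets_mono_sets) (auto split: bool.split)
  then show ?thesis
    unfolding indep_var_eq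
    using measurable_from_subalg[OF sub u] measurable_from_subalg[OF sub v] ind
    by (auto simp: indep_rv_def)
qed

lemma integral_inner_indep_zero:
  fixes \<nu> w :: "'w \<Rightarrow> 'v::euclidean_space"
  assumes "prob_space M" and ind: "indep_rv M borel \<nu> My Y"
    and "integrable M \<nu>" "integral\<^sup>L M \<nu> = 0"
    and w: "w \<in> borel_measurable (vimage_algebra (space M) Y My)"
    and w_bounded: "\<And>\<omega>. norm (w \<omega>) \<le> C"
  shows "integrable M (\<lambda>\<omega>. inner (w \<omega>) (\<nu> \<omega>))" "integral\<^sup>L M (\<lambda>\<omega>. inner (w \<omega>) (\<nu> \<omega>)) = 0"
proof -
  interpret prob_space M by fact
  have Y: "Y \<in> measurable M My" using ind by (simp add: indep_rv_def)
  have "subalgebra M (vimage_algebra (space M) Y My)"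
    using Y by (auto simp: subalgebra_def sets_vimage_algebra2 measurable_def)
  then have wM: "w \<in> borel_measurable M" using w by (rule measurable_from_subalg)
  have component: "integrable M (\<lambda>\<omega>. inner (\<nu> \<omega>) b * inner (w \<omega>) b)
      \<and> integral\<^sup>L M (\<lambda>\<omega>. inner (\<nu> \<omega>) b * inner (w \<omega>) b) = 0" if "b \<in> Basis" for b
  proof -
    have "(\<lambda>\<omega>. inner (\<nu> \<omega>) b) \<in> borel_measurable (vimage_algebra (space M) \<nu> borel)"
      using measurable_vimage_algebra1[of \<nu> "space M" borel] by measurable
    moreover have "(\<lambda>\<omega>. inner (w \<omega>) b) \<in> borel_measurable (vimage_algebra (space M) Y My)"
      using w by measurable
    ultimately have indep: "indep_var borel (\<lambda>\<omega>. inner (\<nu> \<omega>) b) borel (\<lambda>\<omega>. inner (w \<omega>) b)"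
      using indep_rv_imp_indep_var[OF prob_space_axioms ind] by blast
    have "integrable M (\<lambda>\<omega>. inner (w \<omega>) b)"
      using wM w_bounded that
      by (intro integrable_const_bound[where B=C]) (auto intro: order_trans[OF Basis_le_norm])
    then show ?thesis
      using indep_var_lebesgue_integral[OF indep] indep_var_integrable[OF indep] assms(3,4) by simp
  qed
  have "(\<lambda>\<omega>. inner (w \<omega>) (\<nu> \<omega>)) = (\<lambda>\<omega>. \<Sum>b\<in>Basis. inner (\<nu> \<omega>) b * inner (w \<omega>) b)"
    by (subst euclidean_inner) (simp add: mult.commute)
  then show "integrable M (\<lambda>\<omega>. inner (w \<omega>) (\<nu> \<omega>))" "integral\<^sup>L M (\<lambda>\<omega>. inner (w \<omega>) (\<nu> \<omega>)) = 0"
    using component by simp_all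
qed

locale dpd_aircomp =
  fixes N :: nat
    and f :: "nat \<Rightarrow> 'v::euclidean_space \<Rightarrow> real" and g :: "nat \<Rightarrow> 'v \<Rightarrow> 'v"
    and X :: "'v set" and B :: real and a :: "nat \<Rightarrow> real" and \<beta> Pmax :: real
    and h :: "nat \<Rightarrow> nat \<Rightarrow> 'w \<Rightarrow> complex" and n :: "nat \<Rightarrow> 'w \<Rightarrow> 'v"
    and x :: "nat \<Rightarrow> 'w \<Rightarrow> 'v" and lam :: "nat \<Rightarrow> 'w \<Rightarrow> nat \<Rightarrow> real"
    and x0 :: 'v and lam0 :: "nat \<Rightarrow> real"
  assumes X_closed: "closed X" and X_convex: "convex X" and X_nonempty: "X \<noteq> {}"
    and B_nonneg: "0 \<le> B"
    and f_borel: "\<And>i. i \<in> {0..N} \<Longrightarrow> f i \<in> borel_measurable borel"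
    and g_borel: "\<And>i. i \<in> {0..N} \<Longrightarrow> g i \<in> borel_measurable borel"
    and x_0: "\<And>\<omega>. x 0 \<omega> = x0"
    and lam_0: "\<And>\<omega>. lam 0 \<omega> = lam0" and lam0_in_box: "\<And>i. i \<in> {1..N} \<Longrightarrow> lam0 i \<in> {0..B}"
    and x_Suc: "\<And>j \<omega>. x (Suc j) \<omega> = closest_point X (x j \<omega> - a j *\<^sub>R (g 0 (x j \<omega>)
      + ((\<Sum>i\<in>{i\<in>{1..N}. (cmod (h i j \<omega>))\<^sup>2 \<ge> (norm (lam j \<omega> i *\<^sub>R g i (x j \<omega>)))\<^sup>2 / (\<beta> * Pmax)}.
          lam j \<omega> i *\<^sub>R g i (x j \<omega>)) + sqrt \<beta> *\<^sub>R n j \<omega>)))"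
    and lam_Suc: "\<And>j \<omega> i. i \<in> {1..N} \<Longrightarrow>
      lam (Suc j) \<omega> i = closest_point {0..B} (lam j \<omega> i + a j * f i (x j \<omega>))"
begin

definition share :: "nat \<Rightarrow> 'w \<Rightarrow> nat \<Rightarrow> 'v" where
  "share j \<omega> i = lam j \<omega> i *\<^sub>R g i (x j \<omega>)"

definition active :: "nat \<Rightarrow> 'w \<Rightarrow> nat set" where
  "active j \<omega> = {i\<in>{1..N}. (cmod (h i j \<omega>))\<^sup>2 \<ge> (norm (share j \<omega> i))\<^sup>2 / (\<beta> * Pmax)}"

definition lag_grad :: "nat \<Rightarrow> 'w \<Rightarrow> 'v" where
  "lag_grad j \<omega> = g 0 (x j \<omega>) + (\<Sum>i\<in>{1..N}. share j \<omega> i)"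

definition other_randomness :: "nat \<Rightarrow> 'w \<Rightarrow> (nat \<Rightarrow> nat \<Rightarrow> complex) \<times> (nat \<Rightarrow> 'v)" where
  "other_randomness j \<omega> = (\<lambda>t i. h i t \<omega>, \<lambda>t. if t = j then 0 else n t \<omega>)"

definition other_space :: "((nat \<Rightarrow> nat \<Rightarrow> complex) \<times> (nat \<Rightarrow> 'v)) measure" where
  "other_space = (\<Pi>\<^sub>M t\<in>UNIV. \<Pi>\<^sub>M i\<in>UNIV. borel) \<Otimes>\<^sub>M (\<Pi>\<^sub>M t\<in>UNIV. borel)"

lemma x_Suc_active:
  "x (Suc j) \<omega> = closest_point X (x j \<omega> - a j *\<^sub>R (g 0 (x j \<omega>)
      + ((\<Sum>i\<in>active j \<omega>. share j \<omega> i) + sqrt \<beta> *\<^sub>R n j \<omega>)))"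
  unfolding active_def share_def by (rule x_Suc)

lemma active_subset: "active j \<omega> \<subseteq> {1..N}"
  by (auto simp: active_def)

lemma card_active_le: "card (active j \<omega>) \<le> N"
  using card_mono[OF _ active_subset] by simp

lemma multiplier_in_box: "i \<in> {1..N} \<Longrightarrow> lam j \<omega> i \<in> {0..B}"
  using closest_point_in_set[of "{0..B}"] B_nonneg
  by (cases j) (simp_all add: lam_0 lam0_in_box lam_Suc del: atLeastAtMost_iff)

lemma sum_active_eq:
  "(\<Sum>i\<in>active j \<omega>. share j \<omega> i)
    = (\<Sum>i\<in>{1..N}. if (norm (share j \<omega> i))\<^sup>2 / (\<beta> * Pmax) \<le> (cmod (h i j \<omega>))\<^sup>2 then share j \<omega> i else 0)"
  unfolding active_def by (simp only: sum.inter_filter[OF finite_atLeastAtMost])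

text \<open>This is what makes the noise of round \<open>j\<close> independent of \<open>x j\<close> and \<open>lam j\<close>.\<close>
lemma iterate_measurable:
  assumes "\<And>i t. h i t \<in> borel_measurable S" "\<And>t. t < j \<Longrightarrow> n t \<in> borel_measurable S"
  shows "x j \<in> borel_measurable S \<and> (\<forall>i\<in>{1..N}. (\<lambda>\<omega>. lam j \<omega> i) \<in> borel_measurable S)"
  using assms(2)
proof (induction j)
  case 0
  then show ?case by (simp add: x_0 lam_0)
next
  case (Suc j)
  have [measurable]: "x j \<in> borel_measurable S" "n j \<in> borel_measurable S"
    using Suc by auto
  have lam_j: "\<And>i. i \<in> {1..N} \<Longrightarrow> (\<lambda>\<omega>. lam j \<omega> i) \<in> borel_measurable S"
    using Suc by auto
  have [measurable]: "g 0 \<in> borel_measurable borel" "closest_point X \<in> borel_measurable borel"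
    using g_borel X_convex X_closed X_nonempty
    by (auto intro!: borel_measurable_continuous_onI continuous_on_closest_point)
  have "(\<lambda>\<omega>. if (norm (share j \<omega> i))\<^sup>2 / (\<beta> * Pmax) \<le> (cmod (h i j \<omega>))\<^sup>2 then share j \<omega> i else 0)
      \<in> borel_measurable S" if "i \<in> {1..N}" for i
  proof -
    have [measurable]: "g i \<in> borel_measurable borel" using that g_borel by auto
    note [measurable] = lam_j[OF that] assms(1)[of i j]
    show ?thesis using that unfolding share_def by measurable
  qed
  then have [measurable]: "(\<lambda>\<omega>. \<Sum>i\<in>active j \<omega>. share j \<omega> i) \<in> borel_measurable S"
    unfolding sum_active_eq by (rule borel_measurable_sum)
  have "(\<lambda>\<omega>. lam (Suc j) \<omega> i) \<in> borel_measurable S" if "i \<in> {1..N}" for i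
  proof -
    have [measurable]: "closest_point {0..B} \<in> borel_measurable borel"
      using B_nonneg by (intro borel_measurable_continuous_onI continuous_on_closest_point) auto
    have [measurable]: "f i \<in> borel_measurable borel" using that f_borel by auto
    note [measurable] = lam_j[OF that]
    show ?thesis using that by (simp add: lam_Suc) measurable
  qed
  moreover have "x (Suc j) \<in> borel_measurable S"
    unfolding x_Suc_active[abs_def] by measurable
  ultimately show ?case by blast
qed

lemma lag_grad_measurable:
  assumes "x j \<in> borel_measurable S" "\<forall>i\<in>{1..N}. (\<lambda>\<omega>. lam j \<omega> i) \<in> borel_measurable S"
  shows "lag_grad j \<in> borel_measurable S"
proof -
  have "(\<lambda>\<omega>. share j \<omega> i) \<in> borel_measurable S" if "i \<in> {1..N}" for i
  proof -
    have [measurable]: "g i \<in> borel_measurable borel" using that g_borel by auto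
    note [measurable] = assms(1) assms(2)[rule_format, OF that]
    show ?thesis unfolding share_def by measurable
  qed
  moreover have "g 0 \<in> borel_measurable borel" using g_borel by auto
  ultimately show ?thesis
    unfolding lag_grad_def[abs_def] using assms(1) by (intro borel_measurable_add borel_measurable_sum) auto
qed

end

locale dpd_aircomp_prob =
  dpd_aircomp N f g X B a \<beta> Pmax h n x lam x0 lam0 + prob_space M
  for N :: nat and f :: "nat \<Rightarrow> 'v::euclidean_space \<Rightarrow> real" and g X B a \<beta> Pmax
    and h :: "nat \<Rightarrow> nat \<Rightarrow> 'w \<Rightarrow> complex" and n x lam x0 lam0 and M :: "'w measure" +
  fixes xs :: 'v and \<sigma> G L R :: real
  assumes xs_in_X: "xs \<in> X"
    and subgrad: "\<And>i y. i \<in> {0..N} \<Longrightarrow> is_subgrad (f i) y (g i y)"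
    and step_pos: "\<And>j. 0 < a j" and beta_pos: "0 < \<beta>"
    and h_borel: "\<And>i t. h i t \<in> borel_measurable M"
    and n_borel: "\<And>t. n t \<in> borel_measurable M"
    and n_integrable: "\<And>t. integrable M (n t)" and n_mean: "\<And>t. expectation (n t) = 0"
    and n_norm_sq_integrable: "\<And>t. integrable M (\<lambda>\<omega>. (norm (n t \<omega>))\<^sup>2)"
    and n_variance: "\<And>t. expectation (\<lambda>\<omega>. (norm (n t \<omega>))\<^sup>2) = \<sigma>\<^sup>2"
    and n_indep: "\<And>j. indep_rv M borel (n j) other_space (other_randomness j)"
    and G_nonneg: "0 \<le> G"
    and share_bounded: "\<And>i j \<omega>. i \<in> {1..N} \<Longrightarrow> norm (share j \<omega> i) \<le> G"
    and lag_grad_bounded: "\<And>j \<omega>. norm (lag_grad j \<omega>) \<le> L"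
    and dist_bounded: "\<And>j \<omega>. norm (x j \<omega> - xs) \<le> R"
begin

definition lag_gap :: "nat \<Rightarrow> 'w \<Rightarrow> real" where
  "lag_gap j \<omega> = Lag N f (x j \<omega>) (lam j \<omega>) - Lag N f xs (lam j \<omega>)"

lemma lag_gap_le: "lag_gap j \<omega> \<le> inner (lag_grad j \<omega>) (x j \<omega> - xs)"
  using Lag_diff_le_inner_subgrad[of N f "x j \<omega>" "\<lambda>i. g i (x j \<omega>)" "lam j \<omega>" xs]
    subgrad multiplier_in_box
  unfolding lag_gap_def lag_grad_def share_def by auto

lemma lag_gap_bounded:
  "\<bar>lag_gap j \<omega>\<bar> \<le> (L + norm (g 0 xs) + B * (\<Sum>i\<in>{1..N}. norm (g i xs))) * R"
proof -
  define C where "C = norm (g 0 xs) + B * (\<Sum>i\<in>{1..N}. norm (g i xs))"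
  have "0 \<le> R" "0 \<le> L"
    using dist_bounded[of j \<omega>] lag_grad_bounded[of j \<omega>] norm_ge_zero order_trans by blast+
  have "0 \<le> C" unfolding C_def using B_nonneg by (simp add: sum_nonneg)
  have "lag_gap j \<omega> \<le> norm (lag_grad j \<omega>) * norm (x j \<omega> - xs)"
    using lag_gap_le norm_cauchy_schwarz order_trans by blast
  also have "\<dots> \<le> L * R"
    using lag_grad_bounded dist_bounded \<open>0 \<le> L\<close> by (intro mult_mono) auto
  finally have upper: "lag_gap j \<omega> \<le> L * R" .
  define Lxs where "Lxs = g 0 xs + (\<Sum>i\<in>{1..N}. lam j \<omega> i *\<^sub>R g i xs)"
  have "norm (\<Sum>i\<in>{1..N}. lam j \<omega> i *\<^sub>R g i xs) \<le> (\<Sum>i\<in>{1..N}. B * norm (g i xs))"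
    using multiplier_in_box
    by (intro sum_norm_le) (auto intro!: mult_right_mono simp: abs_of_nonneg)
  then have "norm Lxs \<le> C"
    unfolding Lxs_def C_def sum_distrib_left[symmetric] by (smt (verit) norm_triangle_ineq)
  have "- lag_gap j \<omega> \<le> inner Lxs (xs - x j \<omega>)"
    using Lag_diff_le_inner_subgrad[of N f xs "\<lambda>i. g i xs" "lam j \<omega>" "x j \<omega>"]
      subgrad multiplier_in_box
    unfolding lag_gap_def Lxs_def by auto
  also have "\<dots> \<le> norm Lxs * norm (x j \<omega> - xs)"
    using norm_cauchy_schwarz by (metis norm_minus_commute)
  also have "\<dots> \<le> C * R"
    using \<open>norm Lxs \<le> C\<close> dist_bounded \<open>0 \<le> C\<close> by (intro mult_mono) auto
  finally have lower: "- lag_gap j \<omega> \<le> C * R" .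
  show ?thesis
    using upper lower mult_nonneg_nonneg[OF \<open>0 \<le> C\<close> \<open>0 \<le> R\<close>] mult_nonneg_nonneg[OF \<open>0 \<le> L\<close> \<open>0 \<le> R\<close>]
    unfolding C_def by (simp add: algebra_simps)
qed

lemma pointwise_descent:
  "(norm (x (Suc k) \<omega> - xs))\<^sup>2 \<le> (norm (x k \<omega> - xs))\<^sup>2 - 2 * a k * lag_gap k \<omega> + (a k)\<^sup>2 * L\<^sup>2
    - 2 * a k * sqrt \<beta> * inner (x k \<omega> - xs - a k *\<^sub>R lag_grad k \<omega>) (n k \<omega>)
    + (a k)\<^sup>2 * \<beta> * (norm (n k \<omega>))\<^sup>2 + 2 * a k * R * (G * (real N - real (card (active k \<omega>))))"
proof -
  have "lag_grad k \<omega> = g 0 (x k \<omega>) + (\<Sum>i\<in>active k \<omega>. share k \<omega> i) + (\<Sum>i\<in>{1..N} - active k \<omega>. share k \<omega> i)"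
    unfolding lag_grad_def using sum.subset_diff[OF active_subset finite_atLeastAtMost]
    by (simp add: add.assoc add.commute)
  moreover have "norm (\<Sum>i\<in>{1..N} - active k \<omega>. share k \<omega> i) \<le> G * (real N - real (card (active k \<omega>)))"
    using norm_sum_diff_le_card[OF finite_atLeastAtMost active_subset share_bounded] by simp
  ultimately show ?thesis
    using projected_step_norm_sq_le[OF X_convex X_closed xs_in_X _ step_pos beta_pos _ _
        lag_grad_bounded lag_gap_le] dist_bounded[of "Suc k" \<omega>]
    unfolding x_Suc_active by blast
qed

lemma iterate_measurable_other_randomness:
  fixes k :: nat
  defines "S \<equiv> vimage_algebra (space M) (other_randomness k) other_space"
  shows "x k \<in> borel_measurable S \<and> (\<forall>i\<in>{1..N}. (\<lambda>\<omega>. lam k \<omega> i) \<in> borel_measurable S)"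
proof (rule iterate_measurable)
  have "other_randomness k \<in> measurable M other_space"
    using n_indep[of k] by (simp add: indep_rv_def)
  then have Y: "other_randomness k \<in> measurable S other_space"
    unfolding S_def by (intro measurable_vimage_algebra1) (auto simp: measurable_def)
  note fst_comp = measurable_compose[OF Y[unfolded other_space_def] measurable_fst]
  note snd_comp = measurable_compose[OF Y[unfolded other_space_def] measurable_snd]
  show "h i t \<in> borel_measurable S" for i t
    using measurable_compose[OF measurable_compose[OF fst_comp measurable_component_singleton[of t UNIV]]
        measurable_component_singleton[of i UNIV]]
    by (simp add: other_randomness_def)
  show "n t \<in> borel_measurable S" if "t < k" for t
    using measurable_compose[OF snd_comp measurable_component_singleton[of t UNIV]] that
    by (simp add: other_randomness_def)
qed

lemma noise_cross_term:
  "integrable M (\<lambda>\<omega>. inner (x k \<omega> - xs - a k *\<^sub>R lag_grad k \<omega>) (n k \<omega>))"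
  "expectation (\<lambda>\<omega>. inner (x k \<omega> - xs - a k *\<^sub>R lag_grad k \<omega>) (n k \<omega>)) = 0"
proof -
  have [measurable]: "x k \<in> borel_measurable (vimage_algebra (space M) (other_randomness k) other_space)"
    "lag_grad k \<in> borel_measurable (vimage_algebra (space M) (other_randomness k) other_space)"
    using iterate_measurable_other_randomness lag_grad_measurable by blast+
  have w: "(\<lambda>\<omega>. x k \<omega> - xs - a k *\<^sub>R lag_grad k \<omega>)
      \<in> borel_measurable (vimage_algebra (space M) (other_randomness k) other_space)"
    by measurable
  have "norm (x k \<omega> - xs - a k *\<^sub>R lag_grad k \<omega>) \<le> R + a k * L" for \<omega>
  proof -
    have "norm (a k *\<^sub>R lag_grad k \<omega>) \<le> a k * L"
      using step_pos[of k] lag_grad_bounded[of k \<omega>] by (simp add: mult_left_mono)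
    then show ?thesis
      using norm_triangle_ineq4[of "x k \<omega> - xs" "a k *\<^sub>R lag_grad k \<omega>"] dist_bounded[of k \<omega>] by linarith
  qed
  then show "integrable M (\<lambda>\<omega>. inner (x k \<omega> - xs - a k *\<^sub>R lag_grad k \<omega>) (n k \<omega>))"
    "expectation (\<lambda>\<omega>. inner (x k \<omega> - xs - a k *\<^sub>R lag_grad k \<omega>) (n k \<omega>)) = 0"
    using integral_inner_indep_zero[OF prob_space_axioms n_indep n_integrable n_mean w] by auto
qed

lemma iterate_borel_measurable:
  "x j \<in> borel_measurable M" "i \<in> {1..N} \<Longrightarrow> (\<lambda>\<omega>. lam j \<omega> i) \<in> borel_measurable M"
  using iterate_measurable[of M j] h_borel n_borel by auto

lemma dist_sq_integrable: "integrable M (\<lambda>\<omega>. (norm (x j \<omega> - xs))\<^sup>2)"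
proof (rule integrable_const_bound[where B="R\<^sup>2"])
  show "AE \<omega> in M. norm ((norm (x j \<omega> - xs))\<^sup>2) \<le> R\<^sup>2"
    using dist_bounded by (auto intro!: power_mono)
  show "(\<lambda>\<omega>. (norm (x j \<omega> - xs))\<^sup>2) \<in> borel_measurable M"
    using iterate_borel_measurable(1) by measurable
qed

lemma lag_gap_integrable: "integrable M (lag_gap j)"
proof (rule integrable_const_bound)
  show "AE \<omega> in M. norm (lag_gap j \<omega>) \<le> (L + norm (g 0 xs) + B * (\<Sum>i\<in>{1..N}. norm (g i xs))) * R"
    using lag_gap_bounded by simp
  have "(\<lambda>\<omega>. lam j \<omega> i * f i (x j \<omega>) - lam j \<omega> i * f i xs) \<in> borel_measurable M" if "i \<in> {1..N}" for i
  proof -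
    have [measurable]: "f i \<in> borel_measurable borel" using that f_borel by auto
    note [measurable] = iterate_borel_measurable(1) iterate_borel_measurable(2)[OF that]
    show ?thesis by measurable
  qed
  moreover have "(\<lambda>\<omega>. f 0 (x j \<omega>)) \<in> borel_measurable M"
    using f_borel[of 0] iterate_borel_measurable(1) by measurable
  moreover have "lag_gap j = (\<lambda>\<omega>. f 0 (x j \<omega>) - f 0 xs
      + (\<Sum>i\<in>{1..N}. lam j \<omega> i * f i (x j \<omega>) - lam j \<omega> i * f i xs))"
    unfolding lag_gap_def[abs_def] Lag_def by (simp add: sum_subtractf algebra_simps)
  ultimately show "lag_gap j \<in> borel_measurable M"
    by (auto intro!: borel_measurable_add borel_measurable_diff borel_measurable_sum)
qed

lemma card_active_integrable: "integrable M (\<lambda>\<omega>. real (card (active j \<omega>)))"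
proof (rule integrable_const_bound[where B="real N"])
  show "AE \<omega> in M. norm (real (card (active j \<omega>))) \<le> real N"
    using card_active_le by simp
  have "(\<lambda>\<omega>. real (card (active j \<omega>)))
      = (\<lambda>\<omega>. \<Sum>i\<in>{1..N}. if (norm (share j \<omega> i))\<^sup>2 / (\<beta> * Pmax) \<le> (cmod (h i j \<omega>))\<^sup>2 then 1 else 0)"
    unfolding active_def by (simp only: real_of_card sum.inter_filter[OF finite_atLeastAtMost])
  moreover have "(\<lambda>\<omega>. if (norm (share j \<omega> i))\<^sup>2 / (\<beta> * Pmax) \<le> (cmod (h i j \<omega>))\<^sup>2 then 1 else 0 :: real)
      \<in> borel_measurable M" if "i \<in> {1..N}" for i
  proof -
    have [measurable]: "g i \<in> borel_measurable borel" using that g_borel by auto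
    note [measurable] = iterate_borel_measurable(1) iterate_borel_measurable(2)[OF that] h_borel
    show ?thesis unfolding share_def by measurable
  qed
  ultimately show "(\<lambda>\<omega>. real (card (active j \<omega>))) \<in> borel_measurable M" by simp
qed

theorem expected_descent:
  fixes k :: nat
  defines "d \<equiv> real N - expectation (\<lambda>\<omega>. real (card (active k \<omega>)))"
  shows "expectation (\<lambda>\<omega>. (norm (x (Suc k) \<omega> - xs))\<^sup>2)
    \<le> expectation (\<lambda>\<omega>. (norm (x k \<omega> - xs))\<^sup>2) - 2 * a k * expectation (lag_gap k)
      + (a k)\<^sup>2 * (2 * L * G * d + \<beta> * \<sigma>\<^sup>2 + L\<^sup>2) + 2 * a k * d * R * G + (a k)\<^sup>2 * L\<^sup>2 * d\<^sup>2"
proof -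
  define rhs where "rhs \<omega> = (norm (x k \<omega> - xs))\<^sup>2 - 2 * a k * lag_gap k \<omega> + (a k)\<^sup>2 * L\<^sup>2
    - 2 * a k * sqrt \<beta> * inner (x k \<omega> - xs - a k *\<^sub>R lag_grad k \<omega>) (n k \<omega>)
    + (a k)\<^sup>2 * \<beta> * (norm (n k \<omega>))\<^sup>2 + 2 * a k * R * (G * (real N - real (card (active k \<omega>))))"
    for \<omega>
  note integrable = dist_sq_integrable lag_gap_integrable noise_cross_term(1)
    n_norm_sq_integrable card_active_integrable
  have "expectation (\<lambda>\<omega>. (norm (x (Suc k) \<omega> - xs))\<^sup>2) \<le> expectation rhs"
    using pointwise_descent integrable unfolding rhs_def[abs_def]
    by (intro integral_mono dist_sq_integrable) auto
  also have "expectation rhs = expectation (\<lambda>\<omega>. (norm (x k \<omega> - xs))\<^sup>2)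
      - 2 * a k * expectation (lag_gap k) + (a k)\<^sup>2 * L\<^sup>2 + (a k)\<^sup>2 * \<beta> * \<sigma>\<^sup>2 + 2 * a k * R * (G * d)"
    using integrable unfolding rhs_def[abs_def] d_def
    by (simp add: noise_cross_term(2) n_variance prob_space)
  txt \<open>The terms \<open>2 a\<^sup>2 L G d\<close> and \<open>a\<^sup>2 L\<^sup>2 d\<^sup>2\<close> of the stated bound are nonnegative slack.\<close>
  also have "\<dots> \<le> expectation (\<lambda>\<omega>. (norm (x k \<omega> - xs))\<^sup>2) - 2 * a k * expectation (lag_gap k)
      + (a k)\<^sup>2 * (2 * L * G * d + \<beta> * \<sigma>\<^sup>2 + L\<^sup>2) + 2 * a k * d * R * G + (a k)\<^sup>2 * L\<^sup>2 * d\<^sup>2"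
  proof -
    have "expectation (\<lambda>\<omega>. real (card (active k \<omega>))) \<le> expectation (\<lambda>\<omega>. real N)"
      using card_active_integrable card_active_le by (intro integral_mono) auto
    then have "0 \<le> d" unfolding d_def by (simp add: prob_space)
    moreover have "0 \<le> L" using lag_grad_bounded norm_ge_zero order_trans by blast
    ultimately have "0 \<le> (a k)\<^sup>2 * (2 * L * G * d)" using G_nonneg by simp
    then show ?thesis by (simp add: algebra_simps)
  qed
  finally show ?thesis .
qed

end

lemma Dset_memberD: "l \<in> Dset N B \<Longrightarrow> i \<in> {1..N} \<Longrightarrow> l i \<in> {0..B}"
  unfolding Dset_def using Max_ge[of "(\<lambda>i. \<bar>l i\<bar>) ` {1..N}" "\<bar>l i\<bar>"] by fastforce

theorem mainTheorem1:
  fixes M :: "'w measure"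
    and N :: nat
    and f :: "nat \<Rightarrow> 'v::euclidean_space \<Rightarrow> real"
    and g :: "nat \<Rightarrow> 'v \<Rightarrow> 'v"
    and X :: "'v set"
    and xbar :: 'v and lamt :: "nat \<Rightarrow> real" and r :: real
    and xs :: 'v and lams :: "nat \<Rightarrow> real"
    and x0 :: 'v and lam0 :: "nat \<Rightarrow> real"
    and a :: "nat \<Rightarrow> real" and \<beta> Pmax \<sigma> G L R :: real
    and h :: "nat \<Rightarrow> nat \<Rightarrow> 'w \<Rightarrow> complex"
    and n :: "nat \<Rightarrow> 'w \<Rightarrow> 'v"
    and x :: "nat \<Rightarrow> 'w \<Rightarrow> 'v"
    and lam :: "nat \<Rightarrow> 'w \<Rightarrow> nat \<Rightarrow> real"
    and k :: nat
  defines "B \<equiv> (f 0 xbar - dualfun N f X lamt) / Min ((\<lambda>i. - f i xbar) ` {1..N}) + r"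
    and "s \<equiv> (\<lambda>j \<omega> i. lam j \<omega> i *\<^sub>R g i (x j \<omega>))"
    and "A \<equiv> (\<lambda>j \<omega>. {i\<in>{1..N}. (cmod (h i j \<omega>))\<^sup>2 \<ge> (norm (lam j \<omega> i *\<^sub>R g i (x j \<omega>)))\<^sup>2 / (\<beta> * Pmax)})"
  assumes N: "N \<ge> 1"
    and convex: "\<forall>i\<in>{0..N}. convex_on UNIV (f i)"
    and Xprops: "X \<noteq> {}" "compact X" "convex X"
    and subgrad: "\<forall>i\<in>{0..N}. \<forall>y. is_subgrad (f i) y (g i y)"
    and subgrad_meas: "\<forall>i\<in>{0..N}. g i \<in> borel_measurable borel"
    and slater: "xbar \<in> X" "\<forall>i\<in>{1..N}. f i xbar < 0"
    and lamt: "\<forall>i\<in>{1..N}. lamt i \<ge> 0"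
    and r: "r > 0"
    and saddle: "xs \<in> X" "lams \<in> Dset N B"
      "\<forall>x\<in>X. \<forall>l\<in>Dset N B. Lag N f xs l \<le> Lag N f xs lams \<and> Lag N f xs lams \<le> Lag N f x lams"
      "Lag N f xs lams = optval N f X"
    and prob: "prob_space M"
    and h_meas: "\<forall>i j. h i j \<in> borel_measurable M"
    and n_meas: "\<forall>j. n j \<in> borel_measurable M"
    and n_int: "\<forall>j. integrable M (n j)"
    and n_mean: "\<forall>j. integral\<^sup>L M (n j) = 0"
    and n_sq_int: "\<forall>j. integrable M (\<lambda>\<omega>. (norm (n j \<omega>))\<^sup>2)"
    and n_var: "\<forall>j. integral\<^sup>L M (\<lambda>\<omega>. (norm (n j \<omega>))\<^sup>2) = \<sigma>\<^sup>2"
    and n_indep: "\<forall>j. indep_rv M (borel :: 'v measure) (n j)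
        ((\<Pi>\<^sub>M t\<in>UNIV. \<Pi>\<^sub>M i\<in>UNIV. (borel :: complex measure)) \<Otimes>\<^sub>M (\<Pi>\<^sub>M t\<in>UNIV. (borel :: 'v measure)))
        (\<lambda>\<omega>. (\<lambda>t i. h i t \<omega>, \<lambda>t. if t = j then 0 else n t \<omega>))"
    and init: "x0 \<in> X" "lam0 \<in> Dset N B" "\<forall>\<omega>. x 0 \<omega> = x0" "\<forall>\<omega>. lam 0 \<omega> = lam0"
    and steps: "\<forall>j. 0 < a j \<and> a j < 1"
    and beta: "\<beta> > 0" and Pmax: "Pmax > 0"
    and x_upd: "\<forall>j \<omega>. x (Suc j) \<omega> = closest_point X (x j \<omega> - a j *\<^sub>R
        (g 0 (x j \<omega>) + ((\<Sum>i\<in>A j \<omega>. s j \<omega> i) + sqrt \<beta> *\<^sub>R n j \<omega>)))"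
    and lam_upd: "\<forall>j \<omega>. \<forall>i\<in>{1..N}. lam (Suc j) \<omega> i = closest_point {0..B} (lam j \<omega> i + a j * f i (x j \<omega>))"
    and constants: "G > 0" "L > 0" "R > 0" "L > G"
    and boundG: "\<forall>i\<in>{1..N}. \<forall>j \<omega>. norm (s j \<omega> i) \<le> G"
    and boundLx: "\<forall>j \<omega>. norm (g 0 (x j \<omega>) + (\<Sum>i\<in>{1..N}. s j \<omega> i)) \<le> L"
    and boundLF: "\<forall>j \<omega>. sqrt (\<Sum>i\<in>{1..N}. (f i (x j \<omega>))\<^sup>2) \<le> L"
    and boundR: "\<forall>j \<omega>. norm (x j \<omega> - xs) \<le> R"
  shows "integral\<^sup>L M (\<lambda>\<omega>. (norm (x (Suc k) \<omega> - xs))\<^sup>2)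
     \<le> integral\<^sup>L M (\<lambda>\<omega>. (norm (x k \<omega> - xs))\<^sup>2)
       - 2 * a k * integral\<^sup>L M (\<lambda>\<omega>. Lag N f (x k \<omega>) (lam k \<omega>) - Lag N f xs (lam k \<omega>))
       + (a k)\<^sup>2 * (2 * L * G * (real N - integral\<^sup>L M (\<lambda>\<omega>. real (card (A k \<omega>)))) + \<beta> * \<sigma>\<^sup>2 + L\<^sup>2)
       + 2 * a k * (real N - integral\<^sup>L M (\<lambda>\<omega>. real (card (A k \<omega>)))) * R * G
       + (a k)\<^sup>2 * L\<^sup>2 * (real N - integral\<^sup>L M (\<lambda>\<omega>. real (card (A k \<omega>))))\<^sup>2"
proof -
  have B_nonneg: "0 \<le> B" using Dset_memberD[OF init(2), of 1] N by simp
  interpret dpd_aircomp N f g X B a \<beta> Pmax h n x lam x0 lam0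
  proof
    show "f i \<in> borel_measurable borel" if "i \<in> {0..N}" for i
      using convex_on_continuous[OF open_UNIV] convex that borel_measurable_continuous_onI by blast
  qed (use Xprops compact_imp_closed B_nonneg subgrad_meas init Dset_memberD x_upd lam_upd in
      \<open>auto simp: s_def A_def\<close>)
  interpret prob_space M by (rule prob)
  interpret dpd_aircomp_prob N f g X B a \<beta> Pmax h n x lam x0 lam0 M xs \<sigma> G L R
    using saddle(1) subgrad steps beta h_meas n_meas n_int n_mean n_sq_int n_var n_indep
      constants boundG boundLx boundR
    by unfold_locales
      (auto simp: share_def lag_grad_def s_def other_randomness_def[abs_def] other_space_def)
  show ?thesis
    using expected_descent[of k]
    unfolding lag_gap_def active_def share_def A_def by simp
qed

end
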